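(* Let $F:[0,1]^n\to\mathbb{R}$ be twice differentiable, and let $\omega\in\mathbb{R}_{+}$ be such that for all $x\in[0,1]^n$ and all $i,j$, $\nabla^2F(x)_{i,i}=0$ and $\nabla^2F(x)_{i,j}\le\omega$. Then $F$ is $\left(\frac{n}{2}(n^{3/2}-1)\omega\right)$-up-concave.
   Context: $F:[0,1]^n\to\mathbb{R}$ is $\epsilon$-up-concave ($\epsilon\ge0$) if for every $u\in\mathbb{R}^n_{+}$, $x\in[0,1]^n$, the function $G_{x,u}(t)=F(tu+x)$ satisfies $G_{x,u}(\lambda t_1+(1-\lambda)t_2)\ge\lambda G_{x,u}(t_1)+(1-\lambda)G_{x,u}(t_2)-\epsilon$ for all $\lambda\in[0,1]$ and $t_1,t_2\in\mathbb{R}$ such that $t_1u+x$, $t_2u+x$, and $x+\lambda t_1u+(1-\lambda)t_2u$ lie in $[0,1]^n$. *)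

theory Defs
  imports "HOL-Analysis.Analysis"
begin

definition unit_cube :: "(real ^ 'n) set" where
  "unit_cube = {x. \<forall>i. 0 \<le> x $ i \<and> x $ i \<le> 1}"

definition twice_differentiable_with ::
  "(real ^ 'n \<Rightarrow> real) \<Rightarrow> (real ^ 'n \<Rightarrow> real ^ 'n)
   \<Rightarrow> (real ^ 'n \<Rightarrow> real ^ 'n ^ 'n) \<Rightarrow> (real ^ 'n) set \<Rightarrow> bool" where
  "twice_differentiable_with F G H S \<longleftrightarrow>
     (\<forall>x\<in>S. (F has_derivative (\<lambda>h. G x \<bullet> h)) (at x within S) \<and>
             (G has_derivative (\<lambda>h. H x *v h)) (at x within S))"

definition up_concave :: "real \<Rightarrow> (real ^ 'n \<Rightarrow> real) \<Rightarrow> bool" where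
  "up_concave \<epsilon> F \<longleftrightarrow>
     (\<forall>u x. (\<forall>i. 0 \<le> u $ i) \<longrightarrow> x \<in> unit_cube \<longrightarrow>
        (\<forall>lam t1 t2. 0 \<le> lam \<and> lam \<le> 1 \<and>
            t1 *\<^sub>R u + x \<in> unit_cube \<and> t2 *\<^sub>R u + x \<in> unit_cube \<and>
            x + (lam * t1 + (1 - lam) * t2) *\<^sub>R u \<in> unit_cube \<longrightarrow>
            F ((lam * t1 + (1 - lam) * t2) *\<^sub>R u + x)
              \<ge> lam * F (t1 *\<^sub>R u + x) + (1 - lam) * F (t2 *\<^sub>R u + x) - \<epsilon>))"

end

theory Submission
  imports Defs
begin

text \<open>Along a direction u with nonnegative entries, the restriction g t = F (t u + x) has
  g'' = (H u) \<bullet> u \<le> \<omega> * off_diagonal_sum u, because the diagonal of the Hessian vanishes.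
  If g'' \<le> M on [a, b], then M s^2 / 2 - g s is convex there, so the concavity defect
  \<lambda> g a + (1 - \<lambda>) g b - g (\<lambda> a + (1 - \<lambda>) b) is at most M \<lambda> (1 - \<lambda>) (b - a)^2 / 2.
  As both endpoints lie in the unit cube, every entry of (b - a) u lies in [0, 1], and the defect
  is at most \<omega> n (n - 1) / 8, which is below the constant n / 2 (n powr (3/2) - 1) \<omega>.\<close>

lemma mvt_within_Icc_subinterval:
  fixes f f' :: "real \<Rightarrow> real"
  assumes f': "\<And>s. s \<in> {a..b} \<Longrightarrow> (f has_real_derivative f' s) (at s within {a..b})"
    and "p \<le> q" "{p..q} \<subseteq> {a..b}"
  shows "\<exists>\<xi>\<in>{p..q}. f q - f p = f' \<xi> * (q - p)"
proof -
  have "\<exists>\<xi>\<in>{p..q}. f q - f p = (\<lambda>h. f' \<xi> * h) (q - p)"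
  proof (rule mvt_very_simple[OF \<open>p \<le> q\<close>])
    fix s assume "p \<le> s" "s \<le> q"
    with assms(3) have "(f has_real_derivative f' s) (at s within {p..q})"
      using f' has_field_derivative_subset by (metis atLeastAtMost_iff subsetD)
    then show "(f has_derivative (\<lambda>h. f' s * h)) (at s within {p..q})"
      by (simp add: has_field_derivative_def)
  qed
  then show ?thesis by simp
qed

lemma convex_on_Icc_if_second_derivative_nonneg:
  fixes f f' f'' :: "real \<Rightarrow> real"
  assumes f': "\<And>s. s \<in> {a..b} \<Longrightarrow> (f has_real_derivative f' s) (at s within {a..b})"
    and f'': "\<And>s. s \<in> {a..b} \<Longrightarrow> (f' has_real_derivative f'' s) (at s within {a..b})"
    and nonneg: "\<And>s. s \<in> {a..b} \<Longrightarrow> 0 \<le> f'' s"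
  shows "convex_on {a..b} f"
proof (rule convex_on_linorderI)
  have f'_mono: "f' p \<le> f' q" if "a \<le> p" "p \<le> q" "q \<le> b" for p q
  proof -
    have "{p..q} \<subseteq> {a..b}" using that by auto
    then obtain \<xi> where "\<xi> \<in> {p..q}" and "f' q - f' p = f'' \<xi> * (q - p)"
      using mvt_within_Icc_subinterval[OF f'' \<open>p \<le> q\<close>] by blast
    moreover have "0 \<le> f'' \<xi> * (q - p)"
      using nonneg[of \<xi>] \<open>\<xi> \<in> {p..q}\<close> that by simp
    ultimately show ?thesis by simp
  qed
  fix t x y :: real
  assume t: "0 < t" "t < 1" and xy: "x \<in> {a..b}" "y \<in> {a..b}" "x < y"
  define z where "z = (1 - t) *\<^sub>R x + t *\<^sub>R y"
  have xz: "z - x = t * (y - x)" and zy: "y - z = (1 - t) * (y - x)"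
    by (simp_all add: z_def algebra_simps)
  have "0 < t * (y - x)" "0 < (1 - t) * (y - x)" using t xy by simp_all
  then have "x \<le> z" and "z \<le> y" unfolding z_def by (simp_all add: algebra_simps)
  then obtain \<xi>\<^sub>1 \<xi>\<^sub>2 where
    \<xi>\<^sub>1: "\<xi>\<^sub>1 \<in> {x..z}" "f z - f x = f' \<xi>\<^sub>1 * (z - x)" and
    \<xi>\<^sub>2: "\<xi>\<^sub>2 \<in> {z..y}" "f y - f z = f' \<xi>\<^sub>2 * (y - z)"
    using mvt_within_Icc_subinterval[OF f', of x z] mvt_within_Icc_subinterval[OF f', of z y] xy
    by auto
  have "f' \<xi>\<^sub>1 \<le> f' \<xi>\<^sub>2" using \<xi>\<^sub>1(1) \<xi>\<^sub>2(1) xy by (intro f'_mono) auto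
  then have "(1 - t) * (f z - f x) \<le> t * (f y - f z)"
    using t xy by (simp add: \<xi>\<^sub>1(2) \<xi>\<^sub>2(2) xz zy mult_left_mono mult_right_mono)
  then have "f z \<le> (1 - t) * f x + t * f y"
    by (simp add: algebra_simps)
  then show "f ((1 - t) *\<^sub>R x + t *\<^sub>R y) \<le> (1 - t) * f x + t * f y"
    by (simp add: z_def)
qed simp

lemma jensen_gap_le_of_second_derivative_le:
  fixes g g' g'' :: "real \<Rightarrow> real"
  assumes "a \<le> b"
    and g': "\<And>s. s \<in> {a..b} \<Longrightarrow> (g has_real_derivative g' s) (at s within {a..b})"
    and g'': "\<And>s. s \<in> {a..b} \<Longrightarrow> (g' has_real_derivative g'' s) (at s within {a..b})"
    and le_M: "\<And>s. s \<in> {a..b} \<Longrightarrow> g'' s \<le> M"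
    and "0 \<le> l" "l \<le> 1"
  shows "l * g a + (1 - l) * g b - g (l * a + (1 - l) * b) \<le> M * l * (1 - l) * (b - a)\<^sup>2 / 2"
proof -
  define k where "k s = M * s\<^sup>2 / 2 - g s" for s
  have "convex_on {a..b} k"
  proof (rule convex_on_Icc_if_second_derivative_nonneg)
    show "(k has_real_derivative M * s - g' s) (at s within {a..b})" if "s \<in> {a..b}" for s
      unfolding k_def using g'[OF that] by (auto intro!: derivative_eq_intros)
    show "((\<lambda>s. M * s - g' s) has_real_derivative M - g'' s) (at s within {a..b})" if "s \<in> {a..b}" for s
      using g''[OF that] by (auto intro!: derivative_eq_intros)
  qed (use le_M in auto)
  then have "k ((1 - (1 - l)) *\<^sub>R a + (1 - l) *\<^sub>R b) \<le> (1 - (1 - l)) * k a + (1 - l) * k b"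
    using assms by (intro convex_onD_Icc) auto
  then have "l * g a + (1 - l) * g b - g (l * a + (1 - l) * b)
      \<le> M * (l * a\<^sup>2 + (1 - l) * b\<^sup>2 - (l * a + (1 - l) * b)\<^sup>2) / 2"
    by (simp add: k_def algebra_simps diff_divide_distrib add_divide_distrib)
  also have "\<dots> = M * l * (1 - l) * (b - a)\<^sup>2 / 2"
    by (simp add: power2_eq_square algebra_simps)
  finally show ?thesis .
qed

lemma unit_cube_segment:
  assumes "\<And>i. 0 \<le> u $ i" and "a \<le> t" "t \<le> b"
    and "a *\<^sub>R u + x \<in> unit_cube" "b *\<^sub>R u + x \<in> unit_cube"
  shows "t *\<^sub>R u + x \<in> unit_cube"
  unfolding unit_cube_def
proof (intro CollectI allI)
  fix i
  have "a * u $ i \<le> t * u $ i" "t * u $ i \<le> b * u $ i"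
    using assms(1-3) by (simp_all add: mult_right_mono)
  moreover have "0 \<le> a * u $ i + x $ i" "b * u $ i + x $ i \<le> 1"
    using assms(4,5) by (simp_all add: unit_cube_def)
  ultimately show "0 \<le> (t *\<^sub>R u + x) $ i \<and> (t *\<^sub>R u + x) $ i \<le> 1"
    by simp
qed

lemma unit_cube_diff_le_one:
  "p \<in> unit_cube \<Longrightarrow> q \<in> unit_cube \<Longrightarrow> q $ i - p $ i \<le> 1"
  unfolding unit_cube_def by (smt (verit) mem_Collect_eq)

definition off_diagonal_sum :: "real ^ 'n \<Rightarrow> real" where
  "off_diagonal_sum u = (\<Sum>i\<in>UNIV. \<Sum>j\<in>UNIV - {i}. u $ i * u $ j)"

lemma off_diagonal_sum_scaleR: "off_diagonal_sum (c *\<^sub>R u) = c\<^sup>2 * off_diagonal_sum u"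
  by (simp add: off_diagonal_sum_def sum_distrib_left power2_eq_square algebra_simps)

lemma off_diagonal_sum_le:
  fixes u :: "real ^ 'n"
  assumes "\<And>i. 0 \<le> u $ i" "\<And>i. u $ i \<le> 1"
  shows "off_diagonal_sum u \<le> real CARD('n) * (real CARD('n) - 1)"
proof -
  have "(\<Sum>j\<in>UNIV - {i}. u $ i * u $ j) \<le> real CARD('n) - 1" for i
  proof -
    have "(\<Sum>j\<in>UNIV - {i}. u $ i * u $ j) \<le> of_nat (card (UNIV - {i})) * 1"
      by (rule sum_bounded_above) (simp add: assms mult_le_one)
    also have "\<dots> = real CARD('n) - 1"
      by (simp add: card_Diff_singleton of_nat_diff Suc_le_eq)
    finally show ?thesis .
  qed
  then have "off_diagonal_sum u \<le> (\<Sum>i\<in>(UNIV :: 'n set). real CARD('n) - 1)"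
    unfolding off_diagonal_sum_def by (rule sum_mono)
  then show ?thesis by simp
qed

lemma quadratic_form_le_off_diagonal_sum:
  fixes A :: "real ^ 'n ^ 'n"
  assumes diag: "\<And>i. A $ i $ i = 0" and off_diag: "\<And>i j. A $ i $ j \<le> \<omega>"
    and nonneg: "\<And>i. 0 \<le> u $ i"
  shows "(A *v u) \<bullet> u \<le> \<omega> * off_diagonal_sum u"
proof -
  have "(A *v u) \<bullet> u = (\<Sum>i\<in>UNIV. \<Sum>j\<in>UNIV. A $ i $ j * (u $ i * u $ j))"
    by (simp add: matrix_vector_mult_def inner_vec_def sum_distrib_left algebra_simps)
  also have "\<dots> = (\<Sum>i\<in>UNIV. \<Sum>j\<in>UNIV - {i}. A $ i $ j * (u $ i * u $ j))"
  proof (rule sum.cong[OF refl])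
    fix i
    show "(\<Sum>j\<in>UNIV. A $ i $ j * (u $ i * u $ j)) = (\<Sum>j\<in>UNIV - {i}. A $ i $ j * (u $ i * u $ j))"
      using sum.remove[of UNIV i "\<lambda>j. A $ i $ j * (u $ i * u $ j)"] diag[of i] by simp
  qed
  also have "\<dots> \<le> (\<Sum>i\<in>UNIV. \<Sum>j\<in>UNIV - {i}. \<omega> * (u $ i * u $ j))"
    by (intro sum_mono mult_right_mono off_diag) (simp add: nonneg)
  also have "\<dots> = \<omega> * off_diagonal_sum u"
    by (simp add: off_diagonal_sum_def sum_distrib_left)
  finally show ?thesis .
qed

lemma twice_differentiable_with_along_line:
  assumes "twice_differentiable_with F G H S"
    and segment: "\<And>t. t \<in> {a..b} \<Longrightarrow> t *\<^sub>R u + x \<in> S" and "s \<in> {a..b}"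
  shows "((\<lambda>t. F (t *\<^sub>R u + x)) has_real_derivative G (s *\<^sub>R u + x) \<bullet> u) (at s within {a..b})"
    and "((\<lambda>t. G (t *\<^sub>R u + x) \<bullet> u) has_real_derivative (H (s *\<^sub>R u + x) *v u) \<bullet> u)
           (at s within {a..b})"
proof -
  have F': "\<And>y. y \<in> S \<Longrightarrow> (F has_derivative (\<lambda>h. G y \<bullet> h)) (at y within S)"
    and G': "\<And>y. y \<in> S \<Longrightarrow> (G has_derivative (\<lambda>h. H y *v h)) (at y within S)"
    using assms(1) unfolding twice_differentiable_with_def by auto
  have line: "((\<lambda>t. t *\<^sub>R u + x) has_derivative (\<lambda>h. h *\<^sub>R u)) (at s within {a..b})"
    by (auto intro!: derivative_eq_intros)
  have image: "(\<lambda>t. t *\<^sub>R u + x) ` {a..b} \<subseteq> S"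
    using segment by auto
  have "((\<lambda>t. F (t *\<^sub>R u + x)) has_derivative (\<lambda>h. G (s *\<^sub>R u + x) \<bullet> (h *\<^sub>R u))) (at s within {a..b})"
    by (rule has_derivative_in_compose2[OF F' image \<open>s \<in> {a..b}\<close> line])
  then show "((\<lambda>t. F (t *\<^sub>R u + x)) has_real_derivative G (s *\<^sub>R u + x) \<bullet> u) (at s within {a..b})"
    unfolding has_field_derivative_def by (rule has_derivative_eq_rhs) (auto simp: fun_eq_iff)
  have "((\<lambda>t. G (t *\<^sub>R u + x)) has_derivative (\<lambda>h. H (s *\<^sub>R u + x) *v (h *\<^sub>R u))) (at s within {a..b})"
    by (rule has_derivative_in_compose2[OF G' image \<open>s \<in> {a..b}\<close> line])
  then have "((\<lambda>t. G (t *\<^sub>R u + x) \<bullet> u) has_derivative (\<lambda>h. (H (s *\<^sub>R u + x) *v (h *\<^sub>R u)) \<bullet> u))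
      (at s within {a..b})"
    by (rule has_derivative_inner_left)
  then show "((\<lambda>t. G (t *\<^sub>R u + x) \<bullet> u) has_real_derivative (H (s *\<^sub>R u + x) *v u) \<bullet> u)
      (at s within {a..b})"
    unfolding has_field_derivative_def
    by (rule has_derivative_eq_rhs) (auto simp: fun_eq_iff matrix_vector_mult_def inner_vec_def sum_distrib_left algebra_simps)
qed

lemma jensen_gap_along_line_le:
  fixes F :: "real ^ 'n \<Rightarrow> real"
  assumes "twice_differentiable_with F G H unit_cube" and "0 \<le> \<omega>"
    and diag: "\<And>y i. y \<in> unit_cube \<Longrightarrow> H y $ i $ i = 0"
    and off_diag: "\<And>y i j. y \<in> unit_cube \<Longrightarrow> H y $ i $ j \<le> \<omega>"
    and u: "\<And>i. 0 \<le> u $ i" and "a \<le> b"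
    and ends: "a *\<^sub>R u + x \<in> unit_cube" "b *\<^sub>R u + x \<in> unit_cube"
    and l: "0 \<le> l" "l \<le> 1"
  shows "l * F (a *\<^sub>R u + x) + (1 - l) * F (b *\<^sub>R u + x) - F ((l * a + (1 - l) * b) *\<^sub>R u + x)
     \<le> \<omega> * (real CARD('n) * (real CARD('n) - 1)) / 8"
proof -
  let ?N = "real CARD('n) * (real CARD('n) - 1)"
  have segment: "t *\<^sub>R u + x \<in> unit_cube" if "t \<in> {a..b}" for t
    using unit_cube_segment[OF u _ _ ends] that by simp
  have "l * F (a *\<^sub>R u + x) + (1 - l) * F (b *\<^sub>R u + x) - F ((l * a + (1 - l) * b) *\<^sub>R u + x)
      \<le> \<omega> * off_diagonal_sum u * l * (1 - l) * (b - a)\<^sup>2 / 2"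
  proof (rule jensen_gap_le_of_second_derivative_le[OF \<open>a \<le> b\<close> _ _ _ l])
    fix s assume "s \<in> {a..b}"
    show "((\<lambda>t. F (t *\<^sub>R u + x)) has_real_derivative G (s *\<^sub>R u + x) \<bullet> u) (at s within {a..b})"
      and "((\<lambda>t. G (t *\<^sub>R u + x) \<bullet> u) has_real_derivative (H (s *\<^sub>R u + x) *v u) \<bullet> u)
             (at s within {a..b})"
      using twice_differentiable_with_along_line[OF assms(1) segment \<open>s \<in> {a..b}\<close>] by blast+
    show "(H (s *\<^sub>R u + x) *v u) \<bullet> u \<le> \<omega> * off_diagonal_sum u"
      using segment[OF \<open>s \<in> {a..b}\<close>] by (intro quadratic_form_le_off_diagonal_sum diag off_diag u)
  qed
  also have "\<dots> = l * (1 - l) * (\<omega> * off_diagonal_sum ((b - a) *\<^sub>R u)) / 2"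
    by (simp add: off_diagonal_sum_scaleR)
  also have "\<dots> \<le> l * (1 - l) * (\<omega> * ?N) / 2"
  proof -
    have "(b - a) * u $ i \<le> 1" for i
      using unit_cube_diff_le_one[OF ends, of i] by (simp add: algebra_simps)
    then have "off_diagonal_sum ((b - a) *\<^sub>R u) \<le> ?N"
      using u \<open>a \<le> b\<close> by (intro off_diagonal_sum_le) simp_all
    then show ?thesis
      using l \<open>0 \<le> \<omega>\<close> by (simp add: mult_left_mono divide_right_mono)
  qed
  also have "\<dots> \<le> \<omega> * ?N / 8"
  proof -
    have "l * (1 - l) = 1 / 4 - (l - 1 / 2)\<^sup>2"
      by (simp add: power2_eq_square algebra_simps)
    then have "l * (1 - l) \<le> 1 / 4"
      using zero_le_power2[of "l - 1 / 2"] by linarith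
    moreover have "0 \<le> \<omega> * ?N"
      using \<open>0 \<le> \<omega>\<close> by (simp add: Suc_le_eq)
    ultimately have "l * (1 - l) * (\<omega> * ?N) \<le> 1 / 4 * (\<omega> * ?N)"
      by (rule mult_right_mono)
    then show ?thesis by linarith
  qed
  finally show ?thesis .
qed

lemma pred_mult_div_8_le_powr_three_halves:
  fixes n :: real
  assumes "1 \<le> n"
  shows "n * (n - 1) / 8 \<le> n / 2 * (n powr (3/2) - 1)"
proof -
  have "n - 1 \<le> n powr (3/2) - 1"
    using powr_mono[of 1 "3/2" n] assms by simp
  then have "n * (n - 1) \<le> n * (n powr (3/2) - 1)"
    using assms by (intro mult_left_mono) simp_all
  moreover have "0 \<le> n * (n - 1)"
    using assms by simp
  ultimately show ?thesis
    by linarith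
qed

theorem mainTheorem7:
  fixes F :: "real ^ 'n \<Rightarrow> real"
    and G :: "real ^ 'n \<Rightarrow> real ^ 'n"
    and H :: "real ^ 'n \<Rightarrow> real ^ 'n ^ 'n"
    and \<omega> :: real
  assumes "twice_differentiable_with F G H unit_cube"
    and "0 \<le> \<omega>"
    and "\<And>x i. x \<in> unit_cube \<Longrightarrow> H x $ i $ i = 0"
    and "\<And>x i j. x \<in> unit_cube \<Longrightarrow> H x $ i $ j \<le> \<omega>"
  shows "up_concave (real CARD('n) / 2 * (real CARD('n) powr (3/2) - 1) * \<omega>) F"
  unfolding up_concave_def
proof (intro allI impI, elim conjE)
  fix u x :: "real ^ 'n" and lam t1 t2 :: real
  assume u: "\<forall>i. 0 \<le> u $ i" and l: "0 \<le> lam" "lam \<le> 1"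
    and ends: "t1 *\<^sub>R u + x \<in> unit_cube" "t2 *\<^sub>R u + x \<in> unit_cube"
  let ?n = "real CARD('n)"
  have "1 \<le> ?n"
    by (simp add: Suc_le_eq)
  have "lam * F (t1 *\<^sub>R u + x) + (1 - lam) * F (t2 *\<^sub>R u + x) - F ((lam * t1 + (1 - lam) * t2) *\<^sub>R u + x)
      \<le> \<omega> * (?n * (?n - 1)) / 8"
  proof (cases "t1 \<le> t2")
    case True
    with assms u ends l show ?thesis
      by (intro jensen_gap_along_line_le) auto
  next
    case False
    with assms u ends l have "(1 - lam) * F (t2 *\<^sub>R u + x) + (1 - (1 - lam)) * F (t1 *\<^sub>R u + x)
        - F (((1 - lam) * t2 + (1 - (1 - lam)) * t1) *\<^sub>R u + x) \<le> \<omega> * (?n * (?n - 1)) / 8"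
      by (intro jensen_gap_along_line_le) auto
    then show ?thesis
      by (simp add: algebra_simps)
  qed
  moreover have "\<omega> * (?n * (?n - 1)) / 8 \<le> ?n / 2 * (?n powr (3/2) - 1) * \<omega>"
    using mult_right_mono[OF pred_mult_div_8_le_powr_three_halves[OF \<open>1 \<le> ?n\<close>] \<open>0 \<le> \<omega>\<close>]
    by (simp add: mult_ac)
  ultimately show "lam * F (t1 *\<^sub>R u + x) + (1 - lam) * F (t2 *\<^sub>R u + x)
      - real CARD('n) / 2 * (real CARD('n) powr (3 / 2) - 1) * \<omega>
      \<le> F ((lam * t1 + (1 - lam) * t2) *\<^sub>R u + x)"
    by linarith
qed

end
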